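(* Let $\mathscr{H}$ be a complex Hilbert space, $N(\cdot)$ a norm on $\mathbb{B}(\mathscr{H})$, and $B,C\in\mathbb{B}(\mathscr{H})$. Then $$\frac{1}{\sqrt2}\max\{w_N(B+C),w_N(B-C)\}\leq w_{(N,e)}(B,C)\leq\frac{1}{\sqrt2}\sqrt{w_N^2(B+C)+w_N^2(B-C)}.$$
   Context: For $T\in\mathbb{B}(\mathscr{H})$: $\Re(T)=\frac12(T+T^* )$ and $w_N(T)=\sup_{\theta\in\mathbb{R}}N(\Re(e^{i\theta}T))$. For $B,C\in\mathbb{B}(\mathscr{H})$, $w_{(N,e)}(B,C)=\sup_{\lambda_1,\lambda_2\in\mathbb{C},\ |\lambda_1|^2+|\lambda_2|^2\leq 1}\sup_{\theta\in\mathbb{R}} N(\Re(e^{i\theta}(\lambda_1B+\lambda_2C)))$. *)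

theory Defs
  imports Complex_Main
begin

class complex_vector = real_vector +
  fixes scaleC :: "complex \<Rightarrow> 'a \<Rightarrow> 'a"
  assumes scaleC_add_right: "scaleC a (x + y) = scaleC a x + scaleC a y"
    and scaleC_add_left: "scaleC (a + b) x = scaleC a x + scaleC b x"
    and scaleC_scaleC: "scaleC a (scaleC b x) = scaleC (a * b) x"
    and scaleC_one: "scaleC 1 x = x"
    and scaleR_scaleC: "scaleR r x = scaleC (complex_of_real r) x"

class complex_inner = complex_vector + real_normed_vector +
  fixes cinner :: "'a \<Rightarrow> 'a \<Rightarrow> complex"
  assumes cinner_commute: "cinner x y = cnj (cinner y x)"
    and cinner_add_left: "cinner (x + y) z = cinner x z + cinner y z"
    and cinner_scaleC_left: "cinner (scaleC r x) y = r * cinner x y"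
    and cinner_ge_zero: "0 \<le> Re (cinner x x)"
    and cinner_eq_zero_iff: "cinner x x = 0 \<longleftrightarrow> x = 0"
    and norm_eq_sqrt_cinner: "norm x = sqrt (Re (cinner x x))"

text \<open>A complex Hilbert space is a type of class
  \<open>{complex_inner, complete_space}\<close>.\<close>

definition bounded_clinear_op :: "('a::complex_inner \<Rightarrow> 'a) \<Rightarrow> bool" where
  "bounded_clinear_op T \<longleftrightarrow>
     (\<forall>x y. T (x + y) = T x + T y) \<and>
     (\<forall>c x. T (scaleC c x) = scaleC c (T x)) \<and>
     (\<exists>K. \<forall>x. norm (T x) \<le> norm x * K)"

definition BH :: "('a::complex_inner \<Rightarrow> 'a) set" where
  "BH = {T. bounded_clinear_op T}"

definition adj :: "('a::complex_inner \<Rightarrow> 'a) \<Rightarrow> ('a \<Rightarrow> 'a)" where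
  "adj T = (THE S. \<forall>x y. cinner (T x) y = cinner x (S y))"

definition opRe :: "('a::complex_inner \<Rightarrow> 'a) \<Rightarrow> ('a \<Rightarrow> 'a)" where
  "opRe T = (\<lambda>x. scaleC (1/2) (T x + adj T x))"

definition op_norm_on :: "(('a::complex_inner \<Rightarrow> 'a) \<Rightarrow> real) \<Rightarrow> bool" where
  "op_norm_on N \<longleftrightarrow>
     (\<forall>T\<in>BH. N T = 0 \<longleftrightarrow> T = (\<lambda>x. 0)) \<and>
     (\<forall>c. \<forall>T\<in>BH. N (\<lambda>x. scaleC c (T x)) = cmod c * N T) \<and>
     (\<forall>S\<in>BH. \<forall>T\<in>BH. N (\<lambda>x. S x + T x) \<le> N S + N T)"

definition wN :: "(('a::complex_inner \<Rightarrow> 'a) \<Rightarrow> real) \<Rightarrow> ('a \<Rightarrow> 'a) \<Rightarrow> real" where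
  "wN N T = (SUP \<theta>::real. N (opRe (\<lambda>x. scaleC (exp (\<i> * complex_of_real \<theta>)) (T x))))"

definition wNe :: "(('a::complex_inner \<Rightarrow> 'a) \<Rightarrow> real) \<Rightarrow> ('a \<Rightarrow> 'a) \<Rightarrow> ('a \<Rightarrow> 'a) \<Rightarrow> real" where
  "wNe N B C = (SUP l \<in> {(l1, l2). (cmod l1)\<^sup>2 + (cmod l2)\<^sup>2 \<le> 1}.
     (SUP \<theta>::real. N (opRe (\<lambda>x. scaleC (exp (\<i> * complex_of_real \<theta>))
        (scaleC (fst l) (B x) + scaleC (snd l) (C x))))))"

end

theory Submission
  imports Defs
begin

text \<open>For the lower bound take \<open>(\<lambda>\<^sub>1, \<lambda>\<^sub>2) = (1, \<plusminus>1) / sqrt 2\<close> and use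
  that \<open>w\<^sub>N\<close> is absolutely homogeneous. For the upper bound write
  \<open>\<lambda>\<^sub>1 B + \<lambda>\<^sub>2 C = \<mu>\<^sub>1 (B + C) + \<mu>\<^sub>2 (B - C)\<close>; then \<open>|\<mu>\<^sub>1|\<^sup>2 + |\<mu>\<^sub>2|\<^sup>2 \<le> 1/2\<close>,
  and subadditivity and homogeneity of \<open>w\<^sub>N\<close> followed by the Cauchy-Schwarz inequality
  in \<open>\<real>\<^sup>2\<close> conclude.
  These properties of \<open>w\<^sub>N\<close> need \<open>Re\<close> to be real-linear on bounded operators, i.e.
  adjoints must exist; they are obtained from the Riesz representation theorem, proved by
  the minimum-norm argument on the closed hyperplane \<open>f = 1\<close>.\<close>

interpretation scaleC: vector_space "scaleC :: complex \<Rightarrow> 'a \<Rightarrow> 'a::complex_vector"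
  by unfold_locales (auto simp: scaleC_add_right scaleC_add_left scaleC_scaleC scaleC_one)

lemma additive_cinner_left: "additive (\<lambda>x. cinner x y)"
  by unfold_locales (rule cinner_add_left)

lemma cinner_add_right: "cinner x (y + z) = cinner x y + cinner x z"
  by (metis cinner_add_left cinner_commute complex_cnj_add)

lemma cinner_scaleC_right: "cinner x (scaleC r y) = cnj r * cinner x y"
  by (metis cinner_commute cinner_scaleC_left complex_cnj_mult)

lemma cinner_zero_left [simp]: "cinner 0 y = 0"
  by (rule additive.zero[OF additive_cinner_left])

lemma cinner_zero_right [simp]: "cinner x 0 = 0"
  by (metis cinner_commute cinner_zero_left complex_cnj_zero)

lemma cinner_diff_right: "cinner x (y - z) = cinner x y - cinner x z"
  by (metis additive.diff[OF additive_cinner_left] cinner_commute complex_cnj_diff)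

lemma cinner_self: "cinner x x = complex_of_real ((norm x)\<^sup>2)"
proof -
  have "Im (cinner x x) = 0"
    using arg_cong[OF cinner_commute[of x x], of Im] by simp
  moreover have "Re (cinner x x) = (norm x)\<^sup>2"
    by (simp add: norm_eq_sqrt_cinner cinner_ge_zero)
  ultimately show ?thesis
    by (simp add: complex_eq_iff)
qed

lemma cinner_ext:
  assumes "\<And>x. cinner x y = cinner x z"
  shows "y = z"
proof -
  have "cinner (y - z) (y - z) = 0"
    by (simp only: cinner_diff_right assms diff_self)
  then show ?thesis
    by (simp add: cinner_eq_zero_iff)
qed

lemma norm_scaleC: "norm (scaleC c x) = cmod c * norm (x::'a::complex_inner)"
proof -
  have "complex_of_real ((norm (scaleC c x))\<^sup>2) = (c * cnj c) * cinner x x"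
    unfolding cinner_self[symmetric] by (simp add: cinner_scaleC_left cinner_scaleC_right mult.left_commute)
  also have "\<dots> = complex_of_real ((cmod c * norm x)\<^sup>2)"
    by (simp only: complex_norm_square cinner_self of_real_mult power_mult_distrib)
  finally show ?thesis
    by (simp only: of_real_eq_iff power2_eq_iff_nonneg norm_ge_zero zero_le_mult_iff) simp
qed

lemma norm_add_scaleC_power2:
  fixes x y :: "'a::complex_inner"
  shows "(norm (x + scaleC t y))\<^sup>2 = (norm x)\<^sup>2 + 2 * Re (cnj t * cinner x y) + (cmod t * norm y)\<^sup>2"
proof -
  have "complex_of_real ((norm (x + scaleC t y))\<^sup>2)
      = cinner x x + cnj t * cinner x y + t * cinner y x + t * (cnj t * cinner y y)"
    unfolding cinner_self[symmetric]
    by (simp only: cinner_add_left cinner_add_right cinner_scaleC_left cinner_scaleC_right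
        distrib_left add.assoc add.left_commute mult.left_commute)
  then have "(norm (x + scaleC t y))\<^sup>2
      = Re (cinner x x) + Re (cnj t * cinner x y) + Re (t * cinner y x) + Re (t * (cnj t * cinner y y))"
    by (metis Re_complex_of_real plus_complex.sel(1))
  moreover have "Re (t * cinner y x) = Re (cnj t * cinner x y)"
    by (metis cinner_commute cnj.sel(1) complex_cnj_cnj complex_cnj_mult)
  moreover have "t * (cnj t * cinner y y) = complex_of_real ((cmod t * norm y)\<^sup>2)"
    by (simp only: mult.assoc[symmetric] complex_norm_square cinner_self of_real_mult power_mult_distrib)
  ultimately show ?thesis
    by (simp only: cinner_self[of x] Re_complex_of_real)
qed

lemma parallelogram_law:
  "(norm (x + y))\<^sup>2 + (norm (x - y))\<^sup>2 = 2 * (norm x)\<^sup>2 + 2 * (norm (y::'a::complex_inner))\<^sup>2"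
proof -
  have "x + y = x + scaleC 1 y" and "x - y = x + scaleC (-1) y"
    by simp_all
  then show ?thesis
    by (simp only: norm_add_scaleC_power2) simp
qed

lemma norm_diff_scaleC_cinner_power2:
  fixes x y :: "'a::complex_inner"
  shows "(norm (x - scaleC (complex_of_real s * cinner x y) y))\<^sup>2
    = (norm x)\<^sup>2 - 2 * s * (cmod (cinner x y))\<^sup>2 + s\<^sup>2 * (cmod (cinner x y))\<^sup>2 * (norm y)\<^sup>2"
proof -
  define t where "t = complex_of_real s * cinner x y"
  have "cnj t * cinner x y = complex_of_real (s * (cmod (cinner x y))\<^sup>2)"
    by (simp only: t_def complex_cnj_mult complex_cnj_complex_of_real complex_norm_square
        of_real_mult mult.assoc mult.commute[of "cnj _"])
  then have "Re (cnj (- t) * cinner x y) = - (s * (cmod (cinner x y))\<^sup>2)"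
    by simp
  moreover have "cmod (- t) = \<bar>s\<bar> * cmod (cinner x y)"
    by (simp add: t_def norm_mult)
  ultimately show ?thesis
    using norm_add_scaleC_power2[of x "- t" y] by (simp add: t_def power_mult_distrib)
qed

lemma norm_cinner_le: "cmod (cinner x y) \<le> norm x * norm (y::'a::complex_inner)"
proof (cases "y = 0")
  case False
  define A Y where "A = (cmod (cinner x y))\<^sup>2" and "Y = (norm y)\<^sup>2"
  have "Y > 0"
    using False by (simp add: Y_def)
  have "0 \<le> (norm (x - scaleC (complex_of_real (1 / Y) * cinner x y) y))\<^sup>2"
    by simp
  also have "\<dots> = (norm x)\<^sup>2 - A / Y"
    unfolding norm_diff_scaleC_cinner_power2 A_def[symmetric] Y_def[symmetric]
    using \<open>Y > 0\<close> by (simp add: power2_eq_square field_simps)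
  finally have "(cmod (cinner x y))\<^sup>2 \<le> (norm x * norm y)\<^sup>2"
    using \<open>Y > 0\<close> by (simp add: A_def Y_def power_mult_distrib pos_divide_le_eq)
  then show ?thesis
    by (rule power2_le_imp_le) simp
qed simp

lemma cinner_eq_0_if_norm_minimal:
  fixes v w :: "'a::complex_inner"
  assumes min: "\<And>t. norm v \<le> norm (v + scaleC t w)"
  shows "cinner v w = 0"
proof (rule ccontr)
  assume "cinner v w \<noteq> 0"
  define A W where "A = (cmod (cinner v w))\<^sup>2" and "W = (norm w)\<^sup>2"
  define s where "s = 1 / (W + 1)"
  have "A > 0" and "W \<ge> 0"
    using \<open>cinner v w \<noteq> 0\<close> by (simp_all add: A_def W_def)
  then have "s > 0"
    by (simp add: s_def)
  have "norm v \<le> norm (v - scaleC (complex_of_real s * cinner v w) w)"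
    using min[of "- (complex_of_real s * cinner v w)"] by simp
  then have "(norm v)\<^sup>2 \<le> (norm (v - scaleC (complex_of_real s * cinner v w) w))\<^sup>2"
    by (simp add: power_mono)
  then have "0 \<le> s * A * (s * W - 2)"
    unfolding norm_diff_scaleC_cinner_power2 A_def[symmetric] W_def[symmetric]
    by (simp add: algebra_simps power2_eq_square)
  then have "2 \<le> s * W"
    using mult_pos_pos[OF \<open>s > 0\<close> \<open>A > 0\<close>] by (simp add: zero_le_mult_iff)
  moreover have "s * W < 1"
    using \<open>W \<ge> 0\<close> by (simp add: s_def)
  ultimately show False
    by simp
qed

section \<open>Minimum norm and the Riesz representation\<close>

lemma norm_diff_power2_le_if_midpoint_norm_ge:
  fixes x y :: "'a::complex_inner"
  assumes "d \<le> (norm (scaleR (1/2) (x + y)))\<^sup>2"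
  shows "(norm (x - y))\<^sup>2 \<le> 2 * (norm x)\<^sup>2 + 2 * (norm y)\<^sup>2 - 4 * d"
proof -
  have "4 * d \<le> (norm (x + y))\<^sup>2"
    using assms by (simp add: power_mult_distrib power2_eq_square)
  then show ?thesis
    using parallelogram_law[of x y] by linarith
qed

lemma Cauchy_if_dist_le_null_sum:
  fixes X :: "nat \<Rightarrow> 'a::metric_space"
  assumes "e \<longlonglongrightarrow> 0" and dist: "\<And>m n. dist (X m) (X n) \<le> e m + e n"
  shows "Cauchy X"
proof (rule metric_CauchyI)
  fix r :: real
  assume "r > 0"
  then obtain M where M: "\<And>n. n \<ge> M \<Longrightarrow> norm (e n) < r / 2"
    using \<open>e \<longlonglongrightarrow> 0\<close> by (metis LIMSEQ_iff half_gt_zero diff_zero)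
  have "dist (X m) (X n) < r" if "m \<ge> M" "n \<ge> M" for m n
    using dist[of m n] M[OF that(1)] M[OF that(2)] by simp
  then show "\<exists>M. \<forall>m\<ge>M. \<forall>n\<ge>M. dist (X m) (X n) < r"
    by blast
qed

lemma exists_min_norm_if_midpoint_closed:
  fixes S :: "'a::{complex_inner,complete_space} set"
  assumes "closed S" and "S \<noteq> {}"
    and midpoint: "\<And>x y. x \<in> S \<Longrightarrow> y \<in> S \<Longrightarrow> scaleR (1/2) (x + y) \<in> S"
  shows "\<exists>v\<in>S. \<forall>x\<in>S. norm v \<le> norm x"
proof -
  define d where "d = Inf ((\<lambda>x. (norm x)\<^sup>2) ` S)"
  have d_le: "d \<le> (norm x)\<^sup>2" if "x \<in> S" for x
    unfolding d_def using that by (intro cInf_lower bdd_belowI[of _ 0]) auto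
  define e where "e n = inverse (real (Suc n))" for n
  have "\<exists>x\<in>S. (norm x)\<^sup>2 < d + (e n)\<^sup>2 / 2" for n
    using cInf_lessD[of "(\<lambda>x. (norm x)\<^sup>2) ` S" "d + (e n)\<^sup>2 / 2"] \<open>S \<noteq> {}\<close>
    by (auto simp: d_def e_def)
  then obtain X where X_in: "\<And>n. X n \<in> S" and X_lt: "\<And>n. (norm (X n))\<^sup>2 < d + (e n)\<^sup>2 / 2"
    by metis
  have "dist (X m) (X n) \<le> e m + e n" for m n
  proof -
    have "(norm (X m - X n))\<^sup>2 \<le> (e m)\<^sup>2 + (e n)\<^sup>2"
      using norm_diff_power2_le_if_midpoint_norm_ge[OF d_le[OF midpoint[OF X_in[of m] X_in[of n]]]]
        X_lt[of m] X_lt[of n]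
      by linarith
    also have "\<dots> \<le> (e m + e n)\<^sup>2"
      by (simp add: power2_sum e_def)
    finally have "(norm (X m - X n))\<^sup>2 \<le> (e m + e n)\<^sup>2" .
    then show ?thesis
      unfolding dist_norm by (rule power2_le_imp_le) (simp add: e_def)
  qed
  moreover have "e \<longlonglongrightarrow> 0"
    unfolding e_def by (rule LIMSEQ_inverse_real_of_nat)
  ultimately obtain v where "X \<longlonglongrightarrow> v"
    using Cauchy_if_dist_le_null_sum by (metis Cauchy_convergent_iff convergent_def)
  have "v \<in> S"
    using closed_sequentially[OF \<open>closed S\<close> _ \<open>X \<longlonglongrightarrow> v\<close>] X_in by blast
  have "(\<lambda>n. (norm (X n))\<^sup>2) \<longlonglongrightarrow> (norm v)\<^sup>2" and "(\<lambda>n. d + (e n)\<^sup>2 / 2) \<longlonglongrightarrow> d"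
    using \<open>X \<longlonglongrightarrow> v\<close> \<open>e \<longlonglongrightarrow> 0\<close> by (auto intro!: tendsto_eq_intros)
  then have "(norm v)\<^sup>2 \<le> d"
    using X_lt by (intro LIMSEQ_le) (auto intro: less_imp_le)
  then show ?thesis
    using \<open>v \<in> S\<close> d_le by (meson order_trans power2_le_imp_le norm_ge_zero)
qed

text \<open>The vector of minimal norm on the hyperplane \<open>f = 1\<close> is orthogonal
  to the kernel of \<open>f\<close>, and a suitable multiple of it represents \<open>f\<close>.\<close>
lemma riesz_representation:
  fixes f :: "'a::{complex_inner,complete_space} \<Rightarrow> complex"
  assumes add: "\<And>x y. f (x + y) = f x + f y"
    and scale: "\<And>c x. f (scaleC c x) = c * f x"
    and bounded: "\<And>x. cmod (f x) \<le> norm x * K"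
  shows "\<exists>z. \<forall>x. f x = cinner x z"
proof (cases "\<forall>x. f x = 0")
  case False
  then obtain u where "f u \<noteq> 0"
    by blast
  then have "f (scaleC (1 / f u) u) = 1"
    by (simp add: scale)
  then have "{x. f x = 1} \<noteq> {}"
    by blast
  have "bounded_linear f"
    by (rule bounded_linear_intro[of _ K])
      (simp_all add: add scaleR_scaleC scale scaleR_conv_of_real bounded)
  then have "continuous_on UNIV f"
    using bounded_linear.continuous_on[OF _ continuous_on_id] by blast
  then have "closed {x. f x = 1}"
    using closed_Collect_eq[OF _ continuous_on_const] by blast
  moreover have "f (scaleR (1/2) (x + y)) = 1" if "f x = 1" "f y = 1" for x y
    using that by (simp add: scaleR_scaleC scale add)
  ultimately obtain v where "f v = 1" and v_min: "\<And>x. f x = 1 \<Longrightarrow> norm v \<le> norm x"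
    using exists_min_norm_if_midpoint_closed[of "{x. f x = 1}"] \<open>{x. f x = 1} \<noteq> {}\<close> by blast
  have orth: "cinner v w = 0" if "f w = 0" for w
    using that \<open>f v = 1\<close> by (intro cinner_eq_0_if_norm_minimal v_min) (simp add: add scale)
  interpret f: additive f
    by unfold_locales (rule add)
  define V where "V = (norm v)\<^sup>2"
  have "V \<noteq> 0"
    using \<open>f v = 1\<close> f.zero by (auto simp: V_def)
  have "f x = cinner x (scaleC (1 / complex_of_real V) v)" for x
  proof -
    have "cinner v (x - scaleC (f x) v) = 0"
      by (rule orth) (simp add: f.diff scale \<open>f v = 1\<close>)
    then have "cinner v x = cnj (f x) * complex_of_real V"
      by (simp add: cinner_diff_right cinner_scaleC_right cinner_self V_def)
    then have "cinner x v = f x * complex_of_real V"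
      by (metis cinner_commute complex_cnj_cnj complex_cnj_mult complex_cnj_complex_of_real)
    then show ?thesis
      using \<open>V \<noteq> 0\<close> by (simp add: cinner_scaleC_right)
  qed
  then show ?thesis
    by blast
qed (intro exI[of _ 0]; simp)

lemma BH_iff:
  "T \<in> BH \<longleftrightarrow> (\<forall>x y. T (x + y) = T x + T y) \<and> (\<forall>c x. T (scaleC c x) = scaleC c (T x))
    \<and> (\<exists>K. \<forall>x. norm (T x) \<le> norm x * K)"
  by (simp add: BH_def bounded_clinear_op_def)

lemma BH_add: "T \<in> BH \<Longrightarrow> T (x + y) = T x + T y"
  by (simp add: BH_iff)

lemma BH_scaleC: "T \<in> BH \<Longrightarrow> T (scaleC c x) = scaleC c (T x)"
  by (simp add: BH_iff)

lemma BH_bounded: "T \<in> BH \<Longrightarrow> \<exists>K\<ge>0. \<forall>x. norm (T x) \<le> norm x * K"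
  unfolding BH_iff by (metis abs_ge_self abs_ge_zero mult_left_mono norm_ge_zero order_trans)

lemma BH_add_closed:
  assumes "S \<in> BH" and "T \<in> BH"
  shows "(\<lambda>x. S x + T x) \<in> BH"
proof -
  obtain K L where "\<And>x. norm (S x) \<le> norm x * K" and "\<And>x. norm (T x) \<le> norm x * L"
    using BH_bounded[OF assms(1)] BH_bounded[OF assms(2)] by blast
  then have "norm (S x + T x) \<le> norm x * (K + L)" for x
    by (metis distrib_left add_mono norm_triangle_le)
  moreover have "S (x + y) + T (x + y) = (S x + T x) + (S y + T y)" for x y
    using assms by (simp add: BH_add ac_simps)
  moreover have "S (scaleC c x) + T (scaleC c x) = scaleC c (S x + T x)" for c x
    using assms by (simp add: BH_scaleC scaleC_add_right)
  ultimately show ?thesis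
    unfolding BH_iff by blast
qed

lemma BH_scaleC_closed:
  assumes "T \<in> BH"
  shows "(\<lambda>x. scaleC c (T x)) \<in> BH"
proof -
  obtain K where "\<And>x. norm (T x) \<le> norm x * K"
    using BH_bounded[OF assms] by blast
  then have "norm (scaleC c (T x)) \<le> norm x * (cmod c * K)" for x
    by (metis mult.left_commute mult_left_mono norm_ge_zero norm_scaleC)
  moreover have "scaleC c (T (x + y)) = scaleC c (T x) + scaleC c (T y)" for x y
    using assms by (simp add: BH_add scaleC_add_right)
  moreover have "scaleC c (T (scaleC d x)) = scaleC d (scaleC c (T x))" for d x
    using assms by (simp add: BH_scaleC scaleC_scaleC mult.commute)
  ultimately show ?thesis
    unfolding BH_iff by blast
qed

lemma BH_diff_closed:
  assumes "S \<in> BH" and "T \<in> BH"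
  shows "(\<lambda>x. S x - T x) \<in> BH"
  using BH_add_closed[OF assms(1) BH_scaleC_closed[OF assms(2), of "-1"]] by simp

lemma cinner_adj:
  fixes T :: "'a::{complex_inner,complete_space} \<Rightarrow> 'a"
  assumes "T \<in> BH"
  shows "cinner (T x) y = cinner x (adj T y)"
proof -
  obtain K where K: "\<And>x. norm (T x) \<le> norm x * K"
    using BH_bounded[OF assms] by blast
  have "cmod (cinner (T x) y) \<le> norm x * (K * norm y)" for x y
    using norm_cinner_le[of "T x" y] mult_right_mono[OF K[of x] norm_ge_zero[of y]]
    by (simp add: mult.assoc)
  then have "\<exists>z. \<forall>x. cinner (T x) y = cinner x z" for y
    by (intro riesz_representation[where K = "K * norm y"])
      (simp_all add: BH_add[OF assms] BH_scaleC[OF assms] cinner_add_left cinner_scaleC_left)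
  then obtain S where S: "\<And>x y. cinner (T x) y = cinner x (S y)"
    by metis
  have unique: "\<exists>!S. \<forall>x y. cinner (T x) y = cinner x (S y)"
  proof (rule ex1I[of _ S])
    fix S'
    assume S': "\<forall>x y. cinner (T x) y = cinner x (S' y)"
    show "S' = S"
      by (intro ext cinner_ext) (simp add: S'[rule_format, symmetric] S)
  qed (use S in blast)
  show ?thesis
    unfolding adj_def using theI'[OF unique] by blast
qed

lemma adj_unique:
  fixes T :: "'a::{complex_inner,complete_space} \<Rightarrow> 'a"
  assumes "T \<in> BH" and "\<And>x y. cinner (T x) y = cinner x (S y)"
  shows "adj T = S"
  using assms by (metis cinner_adj cinner_ext ext)

lemma adj_in_BH:
  fixes T :: "'a::{complex_inner,complete_space} \<Rightarrow> 'a"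
  assumes "T \<in> BH"
  shows "adj T \<in> BH"
proof -
  obtain K where "K \<ge> 0" and K: "\<And>x. norm (T x) \<le> norm x * K"
    using BH_bounded[OF assms] by blast
  have "norm (adj T y) \<le> norm y * K" for y
  proof -
    have "(norm (adj T y))\<^sup>2 = cmod (cinner (T (adj T y)) y)"
      by (simp add: cinner_adj[OF assms] cinner_self del: of_real_power)
    also have "\<dots> \<le> norm (adj T y) * K * norm y"
      using norm_cinner_le[of "T (adj T y)" y] mult_right_mono[OF K[of "adj T y"] norm_ge_zero[of y]]
      by linarith
    finally show ?thesis
      using \<open>K \<ge> 0\<close> by (cases "adj T y = 0") (auto simp: power2_eq_square mult.commute mult.left_commute)
  qed
  moreover have "adj T (x + y) = adj T x + adj T y" "adj T (scaleC c x) = scaleC c (adj T x)" for c x y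
    by (auto intro: cinner_ext simp: cinner_adj[OF assms, symmetric] cinner_add_right cinner_scaleC_right
        BH_add[OF assms] BH_scaleC[OF assms])
  ultimately show ?thesis
    by (auto simp: BH_iff)
qed

lemma adj_add:
  fixes S T :: "'a::{complex_inner,complete_space} \<Rightarrow> 'a"
  assumes "S \<in> BH" and "T \<in> BH"
  shows "adj (\<lambda>x. S x + T x) = (\<lambda>y. adj S y + adj T y)"
  using assms by (intro adj_unique BH_add_closed) (simp_all add: cinner_add_left cinner_add_right cinner_adj)

lemma adj_scaleC:
  fixes T :: "'a::{complex_inner,complete_space} \<Rightarrow> 'a"
  assumes "T \<in> BH"
  shows "adj (\<lambda>x. scaleC c (T x)) = (\<lambda>y. scaleC (cnj c) (adj T y))"
  using assms by (intro adj_unique BH_scaleC_closed) (simp_all add: cinner_scaleC_left cinner_scaleC_right cinner_adj)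

lemma opRe_in_BH:
  fixes T :: "'a::{complex_inner,complete_space} \<Rightarrow> 'a"
  shows "T \<in> BH \<Longrightarrow> opRe T \<in> BH"
  unfolding opRe_def by (intro BH_scaleC_closed BH_add_closed adj_in_BH)

lemma opRe_add:
  fixes S T :: "'a::{complex_inner,complete_space} \<Rightarrow> 'a"
  assumes "S \<in> BH" and "T \<in> BH"
  shows "opRe (\<lambda>x. S x + T x) = (\<lambda>x. opRe S x + opRe T x)"
  unfolding opRe_def adj_add[OF assms] by (simp add: scaleC_add_right ac_simps)

lemma opRe_scaleC_of_real:
  fixes T :: "'a::{complex_inner,complete_space} \<Rightarrow> 'a"
  assumes "T \<in> BH"
  shows "opRe (\<lambda>x. scaleC (complex_of_real r) (T x)) = (\<lambda>x. scaleC (complex_of_real r) (opRe T x))"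
  unfolding opRe_def adj_scaleC[OF assms] by (simp add: scaleC_add_right scaleC_scaleC mult.commute)

section \<open>The numerical radius\<close>

lemma op_norm_on_scaleC:
  "op_norm_on N \<Longrightarrow> T \<in> BH \<Longrightarrow> N (\<lambda>x. scaleC c (T x)) = cmod c * N T"
  unfolding op_norm_on_def by blast

lemma op_norm_on_triangle:
  "op_norm_on N \<Longrightarrow> S \<in> BH \<Longrightarrow> T \<in> BH \<Longrightarrow> N (\<lambda>x. S x + T x) \<le> N S + N T"
  unfolding op_norm_on_def by blast

lemma op_norm_on_nonneg:
  assumes N: "op_norm_on N" and T: "T \<in> BH"
  shows "0 \<le> N T"
proof -
  have "N (\<lambda>x. 0) = 0" and "N (\<lambda>x. - T x) = N T"
    using op_norm_on_scaleC[OF N T, of 0] op_norm_on_scaleC[OF N T, of "-1"] by simp_all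
  moreover have "N (\<lambda>x. T x + - T x) \<le> N T + N (\<lambda>x. - T x)"
    using op_norm_on_triangle[OF N T BH_scaleC_closed[OF T, of "-1"]] by simp
  ultimately show ?thesis
    by simp
qed

lemma wN_cis: "wN N T = (SUP \<theta>. N (opRe (\<lambda>x. scaleC (cis \<theta>) (T x))))"
  by (simp add: wN_def cis_conv_exp)

lemma opRe_cis:
  fixes T :: "'a::{complex_inner,complete_space} \<Rightarrow> 'a"
  assumes T: "T \<in> BH"
  shows "opRe (\<lambda>x. scaleC (cis \<theta>) (T x))
    = (\<lambda>x. scaleC (complex_of_real (cos \<theta>)) (opRe T x)
        + scaleC (complex_of_real (sin \<theta>)) (opRe (\<lambda>x. scaleC \<i> (T x)) x))"
proof -
  have "(\<lambda>x. scaleC (cis \<theta>) (T x))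
      = (\<lambda>x. scaleC (complex_of_real (cos \<theta>)) (T x) + scaleC (complex_of_real (sin \<theta>)) (scaleC \<i> (T x)))"
    by (simp add: cis.ctr Complex_eq scaleC_add_left scaleC_scaleC mult.commute)
  then show ?thesis
    by (simp only: opRe_add opRe_scaleC_of_real BH_scaleC_closed T)
qed

lemma bdd_above_wN:
  fixes T :: "'a::{complex_inner,complete_space} \<Rightarrow> 'a"
  assumes N: "op_norm_on N" and T: "T \<in> BH"
  shows "bdd_above (range (\<lambda>\<theta>. N (opRe (\<lambda>x. scaleC (cis \<theta>) (T x)))))"
proof (rule bdd_aboveI2)
  fix \<theta>
  have R: "opRe T \<in> BH" and Ri: "opRe (\<lambda>x. scaleC \<i> (T x)) \<in> BH"
    by (simp_all add: opRe_in_BH BH_scaleC_closed T)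
  have "N (opRe (\<lambda>x. scaleC (cis \<theta>) (T x)))
      \<le> \<bar>cos \<theta>\<bar> * N (opRe T) + \<bar>sin \<theta>\<bar> * N (opRe (\<lambda>x. scaleC \<i> (T x)))"
    unfolding opRe_cis[OF T]
    using op_norm_on_triangle[OF N BH_scaleC_closed[OF R, of "complex_of_real (cos \<theta>)"]
        BH_scaleC_closed[OF Ri, of "complex_of_real (sin \<theta>)"]]
    by (simp add: op_norm_on_scaleC[OF N R] op_norm_on_scaleC[OF N Ri])
  also have "\<dots> \<le> N (opRe T) + N (opRe (\<lambda>x. scaleC \<i> (T x)))"
    using op_norm_on_nonneg[OF N R] op_norm_on_nonneg[OF N Ri]
    by (intro add_mono mult_left_le_one_le abs_cos_le_one abs_sin_le_one) auto
  finally show "N (opRe (\<lambda>x. scaleC (cis \<theta>) (T x))) \<le> N (opRe T) + N (opRe (\<lambda>x. scaleC \<i> (T x)))" .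
qed

lemma wN_upper:
  fixes T :: "'a::{complex_inner,complete_space} \<Rightarrow> 'a"
  assumes "op_norm_on N" and "T \<in> BH"
  shows "N (opRe (\<lambda>x. scaleC (cis \<theta>) (T x))) \<le> wN N T"
  unfolding wN_cis by (rule cSUP_upper[OF UNIV_I bdd_above_wN[OF assms]])

lemma wN_least: "(\<And>\<theta>. N (opRe (\<lambda>x. scaleC (cis \<theta>) (T x))) \<le> M) \<Longrightarrow> wN N T \<le> M"
  unfolding wN_cis by (rule cSUP_least) auto

lemma wN_nonneg:
  fixes T :: "'a::{complex_inner,complete_space} \<Rightarrow> 'a"
  assumes N: "op_norm_on N" and T: "T \<in> BH"
  shows "0 \<le> wN N T"
  using op_norm_on_nonneg[OF N opRe_in_BH[OF BH_scaleC_closed[OF T]]] wN_upper[OF N T] by (rule order_trans)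

text \<open>Rotating \<open>T\<close> by \<open>c / cmod c\<close> only shifts the parameter \<open>\<theta>\<close> by \<open>Arg c\<close>.\<close>
lemma wN_scaleC:
  fixes T :: "'a::{complex_inner,complete_space} \<Rightarrow> 'a"
  assumes N: "op_norm_on N" and T: "T \<in> BH"
  shows "wN N (\<lambda>x. scaleC c (T x)) = cmod c * wN N T"
proof -
  define h where "h \<theta> = N (opRe (\<lambda>x. scaleC (cis \<theta>) (T x)))" for \<theta>
  have "N (opRe (\<lambda>x. scaleC (cis \<theta>) (scaleC c (T x)))) = cmod c * h (\<theta> + Arg c)" for \<theta>
  proof -
    have "cis \<theta> * c = complex_of_real (cmod c) * cis (\<theta> + Arg c)"
      by (subst (1) rcis_cmod_Arg[symmetric, of c]) (simp add: rcis_def cis_mult[symmetric] ac_simps)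
    then have rotate: "(\<lambda>x. scaleC (cis \<theta>) (scaleC c (T x)))
        = (\<lambda>x. scaleC (complex_of_real (cmod c)) (scaleC (cis (\<theta> + Arg c)) (T x)))"
      by (simp add: scaleC_scaleC)
    show ?thesis
      unfolding rotate h_def opRe_scaleC_of_real[OF BH_scaleC_closed[OF T]]
        op_norm_on_scaleC[OF N opRe_in_BH[OF BH_scaleC_closed[OF T]]]
      by simp
  qed
  then have "wN N (\<lambda>x. scaleC c (T x)) = (SUP y\<in>range (\<lambda>\<theta>. h (\<theta> + Arg c)). cmod c * y)"
    by (simp add: wN_cis image_image)
  also have "range (\<lambda>\<theta>. h (\<theta> + Arg c)) = range h"
    by (auto simp: image_iff) (metis diff_add_cancel)
  also have "(SUP y\<in>range h. cmod c * y) = cmod c * Sup (range h)"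
    using bdd_above_wN[OF N T] unfolding h_def[abs_def]
    by (intro continuous_at_Sup_mono[symmetric] monoI mult_left_mono continuous_intros) auto
  finally show ?thesis
    by (simp add: wN_cis h_def)
qed

lemma wN_add:
  fixes S T :: "'a::{complex_inner,complete_space} \<Rightarrow> 'a"
  assumes N: "op_norm_on N" and S: "S \<in> BH" and T: "T \<in> BH"
  shows "wN N (\<lambda>x. S x + T x) \<le> wN N S + wN N T"
proof (rule wN_least)
  fix \<theta>
  have "N (opRe (\<lambda>x. scaleC (cis \<theta>) (S x + T x)))
      = N (\<lambda>x. opRe (\<lambda>x. scaleC (cis \<theta>) (S x)) x + opRe (\<lambda>x. scaleC (cis \<theta>) (T x)) x)"
    by (simp add: scaleC_add_right opRe_add BH_scaleC_closed S T)
  also have "\<dots> \<le> wN N S + wN N T"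
    using op_norm_on_triangle[OF N opRe_in_BH opRe_in_BH,
        OF BH_scaleC_closed[OF S, of "cis \<theta>"] BH_scaleC_closed[OF T, of "cis \<theta>"]]
      wN_upper[OF N S, of \<theta>] wN_upper[OF N T, of \<theta>] by linarith
  finally show "N (opRe (\<lambda>x. scaleC (cis \<theta>) (S x + T x))) \<le> wN N S + wN N T" .
qed

lemma wN_linear_combination_le:
  fixes B C :: "'a::{complex_inner,complete_space} \<Rightarrow> 'a"
  assumes N: "op_norm_on N" and B: "B \<in> BH" and C: "C \<in> BH"
  shows "wN N (\<lambda>x. scaleC a (B x) + scaleC b (C x)) \<le> cmod a * wN N B + cmod b * wN N C"
  using wN_add[OF N BH_scaleC_closed[OF B] BH_scaleC_closed[OF C]] by (simp add: wN_scaleC N B C)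

lemma wNe_SUP_wN:
  "wNe N B C = (SUP l\<in>{(l1, l2). (cmod l1)\<^sup>2 + (cmod l2)\<^sup>2 \<le> 1}.
    wN N (\<lambda>x. scaleC (fst l) (B x) + scaleC (snd l) (C x)))"
  by (simp add: wNe_def wN_def)

lemma wN_le_wNe:
  fixes B C :: "'a::{complex_inner,complete_space} \<Rightarrow> 'a"
  assumes N: "op_norm_on N" and B: "B \<in> BH" and C: "C \<in> BH"
    and l: "(cmod l1)\<^sup>2 + (cmod l2)\<^sup>2 \<le> 1"
  shows "wN N (\<lambda>x. scaleC l1 (B x) + scaleC l2 (C x)) \<le> wNe N B C"
proof -
  have "wN N (\<lambda>x. scaleC (fst l) (B x) + scaleC (snd l) (C x)) \<le> wN N B + wN N C"
    if "(cmod (fst l))\<^sup>2 + (cmod (snd l))\<^sup>2 \<le> 1" for l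
  proof -
    have "(cmod (fst l))\<^sup>2 \<le> 1" and "(cmod (snd l))\<^sup>2 \<le> 1"
      using that zero_le_power2[of "cmod (fst l)"] zero_le_power2[of "cmod (snd l)"] by linarith+
    then have "cmod (fst l) \<le> 1" and "cmod (snd l) \<le> 1"
      by (simp_all add: abs_square_le_1)
    then show ?thesis
      using wN_nonneg[OF N B] wN_nonneg[OF N C]
      by (intro order_trans[OF wN_linear_combination_le[OF N B C]] add_mono mult_left_le_one_le) auto
  qed
  then have "bdd_above ((\<lambda>l. wN N (\<lambda>x. scaleC (fst l) (B x) + scaleC (snd l) (C x)))
      ` {(l1, l2). (cmod l1)\<^sup>2 + (cmod l2)\<^sup>2 \<le> 1})"
    by (intro bdd_aboveI2[of _ _ "wN N B + wN N C"]) auto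
  then show ?thesis
    unfolding wNe_SUP_wN using l by (intro cSUP_upper2[where x = "(l1, l2)"]) auto
qed

lemma wNe_least:
  assumes "\<And>l1 l2. (cmod l1)\<^sup>2 + (cmod l2)\<^sup>2 \<le> 1 \<Longrightarrow> wN N (\<lambda>x. scaleC l1 (B x) + scaleC l2 (C x)) \<le> M"
  shows "wNe N B C \<le> M"
  unfolding wNe_SUP_wN by (rule cSUP_least) (auto intro!: assms exI[of _ 0])

lemma mult_plus_mult_le_sqrt_sum_squares:
  fixes a b p q :: real
  shows "a * p + b * q \<le> sqrt (a\<^sup>2 + b\<^sup>2) * sqrt (p\<^sup>2 + q\<^sup>2)"
proof -
  have "(a * p + b * q)\<^sup>2 \<le> (a\<^sup>2 + b\<^sup>2) * (p\<^sup>2 + q\<^sup>2)"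
    using zero_le_power2[of "a * q - b * p"] by (simp add: power2_eq_square algebra_simps)
  then show ?thesis
    by (simp add: real_le_rsqrt real_sqrt_mult[symmetric])
qed

text \<open>Writing \<open>l1 B + l2 C = m1 (B + C) + m2 (B - C)\<close> with \<open>m1 = (l1 + l2) / 2\<close> and
  \<open>m2 = (l1 - l2) / 2\<close>, the parallelogram law gives \<open>|m1|\<^sup>2 + |m2|\<^sup>2 \<le> 1 / 2\<close>.\<close>
lemma wN_le_sum_diff:
  fixes B C :: "'a::{complex_inner,complete_space} \<Rightarrow> 'a"
  assumes N: "op_norm_on N" and B: "B \<in> BH" and C: "C \<in> BH"
    and l: "(cmod l1)\<^sup>2 + (cmod l2)\<^sup>2 \<le> 1"
  shows "wN N (\<lambda>x. scaleC l1 (B x) + scaleC l2 (C x))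
    \<le> 1 / sqrt 2 * sqrt ((wN N (\<lambda>x. B x + C x))\<^sup>2 + (wN N (\<lambda>x. B x - C x))\<^sup>2)"
proof -
  define m1 m2 where "m1 = (l1 + l2) / 2" and "m2 = (l1 - l2) / 2"
  define wP wQ where "wP = wN N (\<lambda>x. B x + C x)" and "wQ = wN N (\<lambda>x. B x - C x)"
  have BC: "(\<lambda>x. B x + C x) \<in> BH" "(\<lambda>x. B x - C x) \<in> BH"
    using B C by (rule BH_add_closed, rule BH_diff_closed)
  have l_eq: "l1 = m1 + m2" "l2 = m1 - m2"
    by (simp_all add: m1_def m2_def field_simps)
  have "(\<lambda>x. scaleC l1 (B x) + scaleC l2 (C x)) = (\<lambda>x. scaleC m1 (B x + C x) + scaleC m2 (B x - C x))"
    unfolding l_eq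
    by (simp add: scaleC_add_left scaleC.scale_left_diff_distrib scaleC.scale_right_diff_distrib algebra_simps)
  then have "wN N (\<lambda>x. scaleC l1 (B x) + scaleC l2 (C x)) \<le> cmod m1 * wP + cmod m2 * wQ"
    unfolding wP_def wQ_def by (simp add: wN_linear_combination_le[OF N BC])
  also have "\<dots> \<le> sqrt ((cmod m1)\<^sup>2 + (cmod m2)\<^sup>2) * sqrt (wP\<^sup>2 + wQ\<^sup>2)"
    by (rule mult_plus_mult_le_sqrt_sum_squares)
  also have "sqrt ((cmod m1)\<^sup>2 + (cmod m2)\<^sup>2) \<le> 1 / sqrt 2"
  proof -
    have "(cmod m1)\<^sup>2 + (cmod m2)\<^sup>2 = ((cmod l1)\<^sup>2 + (cmod l2)\<^sup>2) / 2"
      unfolding m1_def m2_def cmod_power2 by (simp add: power2_eq_square field_simps)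
    also have "\<dots> \<le> 1 / 2"
      using l by simp
    finally show ?thesis
      by (metis real_sqrt_divide real_sqrt_le_mono real_sqrt_one)
  qed
  finally show ?thesis
    unfolding wP_def wQ_def by (simp add: mult_right_mono)
qed

theorem theorem2p7:
  fixes N :: "('a::{complex_inner, complete_space} \<Rightarrow> 'a) \<Rightarrow> real"
    and B C :: "'a \<Rightarrow> 'a"
  assumes "op_norm_on N" and "B \<in> BH" and "C \<in> BH"
  shows "1 / sqrt 2 * max (wN N (\<lambda>x. B x + C x)) (wN N (\<lambda>x. B x - C x)) \<le> wNe N B C
     \<and> wNe N B C \<le> 1 / sqrt 2 * sqrt ((wN N (\<lambda>x. B x + C x))\<^sup>2 + (wN N (\<lambda>x. B x - C x))\<^sup>2)"
proof -
  define a where "a = complex_of_real (1 / sqrt 2)"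
  have "cmod a = 1 / sqrt 2" and "(cmod a)\<^sup>2 + (cmod (- a))\<^sup>2 \<le> 1"
    by (simp_all add: a_def norm_divide power_divide)
  have BC: "(\<lambda>x. B x + C x) \<in> BH" "(\<lambda>x. B x - C x) \<in> BH"
    using assms(2,3) by (rule BH_add_closed, rule BH_diff_closed)
  have "wN N (\<lambda>x. scaleC a (B x) + scaleC a (C x)) = 1 / sqrt 2 * wN N (\<lambda>x. B x + C x)"
    and "wN N (\<lambda>x. scaleC a (B x) + scaleC (- a) (C x)) = 1 / sqrt 2 * wN N (\<lambda>x. B x - C x)"
    using wN_scaleC[OF assms(1) BC(1), of a] wN_scaleC[OF assms(1) BC(2), of a] \<open>cmod a = 1 / sqrt 2\<close>
    by (simp_all add: scaleC_add_right scaleC.scale_right_diff_distrib)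
  then have "1 / sqrt 2 * max (wN N (\<lambda>x. B x + C x)) (wN N (\<lambda>x. B x - C x)) \<le> wNe N B C"
    using wN_le_wNe[OF assms, of a a] wN_le_wNe[OF assms, of a "- a"] \<open>(cmod a)\<^sup>2 + (cmod (- a))\<^sup>2 \<le> 1\<close>
    by (auto simp: max_def)
  moreover have "wNe N B C \<le> 1 / sqrt 2 * sqrt ((wN N (\<lambda>x. B x + C x))\<^sup>2 + (wN N (\<lambda>x. B x - C x))\<^sup>2)"
    by (rule wNe_least) (rule wN_le_sum_diff[OF assms])
  ultimately show ?thesis ..
qed

end
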